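(* Let $\mathfrak{R}=(G,G',S,\phi,\rho,\delta)$ be a reconciliation and $x\in V(G)$. If $x\in\Sigma(\mathfrak{R})$, then $x\in\Sigma(\mathfrak{R}_{lca})$ and $\rho(x)=\rho_{lca}(x)$.
   Context: All trees are rooted binary trees whose root node has degree 1; every other non-leaf node $x$ has exactly two children $x_l,x_r$. For nodes of a rooted tree, $y\le x$ means $x$ lies on the path from $y$ to the root. $G$ is a gene tree, $S$ a species tree, $\phi:L(G)\to L(S)$, with the standing assumption that the last common ancestor in $S$ of $\phi(L(G))$ is the unique child of $root(S)$. A tree $G'$ is an extension of $G$ if $G$ is obtained from $G'$ by pruning some subtrees and suppressing degree-2 nodes; $V(G)\subseteq V(G')$. A map $\rho:V(G')\to V(S)$ is consistent with $S$ if $\rho(root(G'))=root(S)$ and every node $x$ of $G'$ with two children satisfies (D) $\rho(x)=\rho(x_l)=\rho(x_r)$ or (S) $\rho(x)_l=\rho(x_l)$ and $\rho(x)_r=\rho(x_r)$. A DL reconciliation is $(G,G',S,\phi,\rho)$ with $G'$ an extension of $G$, $\rho$ consistent, $\rho|_{L(G)}=\phi$. A reconciliation additionally has an injective partial function $\delta$ from duplications to losses ($L(G')\setminus L(G)$) with $\rho(x)=\rho(\delta(x))$. Duplications $\Delta$ are nodes with two children satisfying (D); speciations $\Sigma$ those satisfying (S). For $x\in V(G)$, $\rho_{lca}(x)$ is the last common ancestor in $S$ of $\{\phi(l): l\in L(G), l\le x\}$; the LCA reconciliation $\mathfrak{R}_{lca}$ is the DL reconciliation (with empty $\delta$) whose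 map agrees with $\rho_{lca}$ on $V(G)$ and which has the minimum number of losses among such DL reconciliations. *)

theory Defs
  imports Main
begin

text \<open>A rooted tree is represented by its root and a partial parent map.
  The node set is the root together with the domain of the parent map.\<close>

type_synonym 'a tree = "'a \<times> ('a \<rightharpoonup> 'a)"

definition troot :: "'a tree \<Rightarrow> 'a" where
  "troot T = fst T"

definition tpar :: "'a tree \<Rightarrow> 'a \<rightharpoonup> 'a" where
  "tpar T = snd T"

definition tV :: "'a tree \<Rightarrow> 'a set" where
  "tV T = insert (troot T) (dom (tpar T))"

definition children :: "'a tree \<Rightarrow> 'a \<Rightarrow> 'a set" where
  "children T x = {y. tpar T y = Some x}"

text \<open>tleq T y x  means  y \<le> x, i.e. x lies on the path from y to the root.\<close>
definition tleq :: "'a tree \<Rightarrow> 'a \<Rightarrow> 'a \<Rightarrow> bool" where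
  "tleq T y x \<longleftrightarrow> (y, x) \<in> {(a, b). tpar T a = Some b}\<^sup>*"

definition leaves :: "'a tree \<Rightarrow> 'a set" where
  "leaves T = {x \<in> tV T. children T x = {}}"

definition is_tree :: "'a tree \<Rightarrow> bool" where
  "is_tree T \<longleftrightarrow>
     finite (dom (tpar T)) \<and> troot T \<notin> dom (tpar T) \<and> ran (tpar T) \<subseteq> tV T \<and>
     (\<forall>x\<in>tV T. tleq T x (troot T)) \<and>
     card (children T (troot T)) = 1 \<and>
     (\<forall>x\<in>tV T - {troot T}. card (children T x) = 0 \<or> card (children T x) = 2)"

definition lca :: "'a tree \<Rightarrow> 'a set \<Rightarrow> 'a" where
  "lca T A = (THE x. x \<in> tV T \<and> (\<forall>a\<in>A. tleq T a x) \<and>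
                 (\<forall>y\<in>tV T. (\<forall>a\<in>A. tleq T a y) \<longrightarrow> tleq T x y))"

definition prune_step :: "'a tree \<Rightarrow> 'a tree \<Rightarrow> bool" where
  "prune_step T T' \<longleftrightarrow> (\<exists>v\<in>tV T. v \<noteq> troot T \<and>
      T' = (troot T, \<lambda>y. if tleq T y v then None else tpar T y))"

definition suppress_step :: "'a tree \<Rightarrow> 'a tree \<Rightarrow> bool" where
  "suppress_step T T' \<longleftrightarrow> (\<exists>u\<in>tV T. u \<noteq> troot T \<and> (\<exists>w. children T u = {w}) \<and>
      T' = (troot T, (\<lambda>y. if tpar T y = Some u then tpar T u else tpar T y)(u := None)))"

definition ext_step :: "'a tree \<Rightarrow> 'a tree \<Rightarrow> bool" where
  "ext_step T T' \<longleftrightarrow> prune_step T T' \<or> suppress_step T T'"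

text \<open>G' is an extension of G: G is obtained from G' by pruning subtrees and suppressing
  degree-2 nodes (node names are preserved, so V(G) \<subseteq> V(G')).\<close>
definition is_extension :: "'a tree \<Rightarrow> 'a tree \<Rightarrow> bool" where
  "is_extension G' G \<longleftrightarrow> is_tree G' \<and> is_tree G \<and> ext_step\<^sup>*\<^sup>* G' G"

definition is_dup :: "'a tree \<Rightarrow> 'b tree \<Rightarrow> ('a \<Rightarrow> 'b) \<Rightarrow> 'a \<Rightarrow> bool" where
  "is_dup T S \<rho> x \<longleftrightarrow> card (children T x) = 2 \<and> (\<forall>y\<in>children T x. \<rho> y = \<rho> x)"

definition is_spec :: "'a tree \<Rightarrow> 'b tree \<Rightarrow> ('a \<Rightarrow> 'b) \<Rightarrow> 'a \<Rightarrow> bool" where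
  "is_spec T S \<rho> x \<longleftrightarrow> card (children T x) = 2 \<and> card (children S (\<rho> x)) = 2 \<and>
      \<rho> ` children T x = children S (\<rho> x)"

definition consistent :: "'a tree \<Rightarrow> 'b tree \<Rightarrow> ('a \<Rightarrow> 'b) \<Rightarrow> bool" where
  "consistent G' S \<rho> \<longleftrightarrow> \<rho> (troot G') = troot S \<and> (\<forall>x\<in>tV G'. \<rho> x \<in> tV S) \<and>
     (\<forall>x\<in>tV G'. card (children G' x) = 2 \<longrightarrow> is_dup G' S \<rho> x \<or> is_spec G' S \<rho> x)"

definition Delta :: "'a tree \<Rightarrow> 'b tree \<Rightarrow> ('a \<Rightarrow> 'b) \<Rightarrow> 'a set" where
  "Delta G' S \<rho> = {x \<in> tV G'. is_dup G' S \<rho> x}"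

definition Sigma :: "'a tree \<Rightarrow> 'b tree \<Rightarrow> ('a \<Rightarrow> 'b) \<Rightarrow> 'a set" where
  "Sigma G' S \<rho> = {x \<in> tV G'. is_spec G' S \<rho> x}"

definition losses :: "'a tree \<Rightarrow> 'a tree \<Rightarrow> 'a set" where
  "losses G G' = leaves G' - leaves G"

definition dl_reconciliation ::
  "'a tree \<Rightarrow> 'a tree \<Rightarrow> 'b tree \<Rightarrow> ('a \<Rightarrow> 'b) \<Rightarrow> ('a \<Rightarrow> 'b) \<Rightarrow> bool" where
  "dl_reconciliation G G' S \<phi> \<rho> \<longleftrightarrow> is_tree S \<and> is_extension G' G \<and> consistent G' S \<rho> \<and>
     (\<forall>l\<in>leaves G. \<rho> l = \<phi> l)"

definition reconciliation ::
  "'a tree \<Rightarrow> 'a tree \<Rightarrow> 'b tree \<Rightarrow> ('a \<Rightarrow> 'b) \<Rightarrow> ('a \<Rightarrow> 'b) \<Rightarrow> ('a \<rightharpoonup> 'a) \<Rightarrow> bool" where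
  "reconciliation G G' S \<phi> \<rho> \<delta> \<longleftrightarrow> dl_reconciliation G G' S \<phi> \<rho> \<and>
     dom \<delta> \<subseteq> Delta G' S \<rho> \<and> ran \<delta> \<subseteq> losses G G' \<and> inj_on \<delta> (dom \<delta>) \<and>
     (\<forall>x\<in>dom \<delta>. \<rho> (the (\<delta> x)) = \<rho> x)"

definition rho_lca :: "'a tree \<Rightarrow> 'b tree \<Rightarrow> ('a \<Rightarrow> 'b) \<Rightarrow> 'a \<Rightarrow> 'b" where
  "rho_lca G S \<phi> x = lca S (\<phi> ` {l \<in> leaves G. tleq G l x})"

definition lca_reconciliation ::
  "'a tree \<Rightarrow> 'a tree \<Rightarrow> 'b tree \<Rightarrow> ('a \<Rightarrow> 'b) \<Rightarrow> ('a \<Rightarrow> 'b) \<Rightarrow> bool" where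
  "lca_reconciliation G G' S \<phi> \<rho> \<longleftrightarrow>
     dl_reconciliation G G' S \<phi> \<rho> \<and> (\<forall>x\<in>tV G. \<rho> x = rho_lca G S \<phi> x) \<and>
     (\<forall>G2 \<rho>2. dl_reconciliation G G2 S \<phi> \<rho>2 \<and> (\<forall>x\<in>tV G. \<rho>2 x = rho_lca G S \<phi> x) \<longrightarrow>
        card (losses G G') \<le> card (losses G G2))"

definition standing :: "'a tree \<Rightarrow> 'b tree \<Rightarrow> ('a \<Rightarrow> 'b) \<Rightarrow> bool" where
  "standing G S \<phi> \<longleftrightarrow> \<phi> ` leaves G \<subseteq> leaves S \<and>
     lca S (\<phi> ` leaves G) \<in> children S (troot S)"

end

(*
  Extensions of G are characterised intrinsically: G' is an extension of G iff G' displays G,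
  i.e. G is G' with nodes deleted, keeping the root, the ancestor order and all branch points.

  Let x in V(G) be a speciation of a reconciliation rho. Its two children a, b in G lie below the
  two distinct children of x in G', which rho maps onto the two children t1, t2 of rho x. Hence
  the leaves below a map below t1 and those below b below t2, so the lca of the leaves below x is
  rho x. For an LCA reconciliation rho2 the images of a and b therefore still lie below t1 and t2.
  If x were a duplication of rho2, walk up in G2 from a (from b) towards x and let d (e) be the
  node just below the first node mapped to rho x; consistency forces rho2 d = t1 and rho2 e = t2.
  Regrafting d and e directly below x, dropping everything else strictly below x, yields a
  reconciliation of G with rho2 in which x is a speciation. The old parent of d
  is dropped together with the subtree of its other child, which contains a loss, so the number
  of losses strictly decreases, contradicting minimality.
*)
theory Submission
  imports Defs
begin

section \<open>Rooted trees\<close>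

definition parent_rel :: "'a tree \<Rightarrow> ('a \<times> 'a) set" where
  "parent_rel T = {(a, b). tpar T a = Some b}"

lemma parent_rel_iff[simp]: "(a, b) \<in> parent_rel T \<longleftrightarrow> tpar T a = Some b"
  by (simp add: parent_rel_def)

lemma tleq_iff_rtrancl: "tleq T y x \<longleftrightarrow> (y, x) \<in> (parent_rel T)\<^sup>*"
  by (simp add: tleq_def parent_rel_def)

lemma single_valued_parent_rel: "single_valued (parent_rel T)"
  by (auto simp: single_valued_def)

definition rooted_tree :: "'a tree \<Rightarrow> bool" where
  "rooted_tree T \<longleftrightarrow> finite (dom (tpar T)) \<and> troot T \<notin> dom (tpar T) \<and> ran (tpar T) \<subseteq> tV T \<and>
     (\<forall>x\<in>tV T. tleq T x (troot T))"

lemma is_tree_rooted: "is_tree T \<Longrightarrow> rooted_tree T"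
  by (simp add: is_tree_def rooted_tree_def)

lemma root_parent_None: "rooted_tree T \<Longrightarrow> tpar T (troot T) = None"
  unfolding rooted_tree_def by blast

lemma tleq_root: "rooted_tree T \<Longrightarrow> x \<in> tV T \<Longrightarrow> tleq T x (troot T)"
  unfolding rooted_tree_def by blast

lemma parent_in_tV: "rooted_tree T \<Longrightarrow> tpar T c = Some y \<Longrightarrow> y \<in> tV T"
  unfolding rooted_tree_def ran_def by blast

lemma child_in_tV: "tpar T c = Some y \<Longrightarrow> c \<in> tV T"
  by (auto simp: tV_def)

lemma troot_in_tV[simp]: "troot T \<in> tV T"
  by (simp add: tV_def)

lemma nonroot_has_parent: "y \<in> tV T \<Longrightarrow> y \<noteq> troot T \<Longrightarrow> \<exists>z. tpar T y = Some z"
  unfolding tV_def by blast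

lemma finite_tV: "rooted_tree T \<Longrightarrow> finite (tV T)"
  by (simp add: rooted_tree_def tV_def)

lemma finite_children: "rooted_tree T \<Longrightarrow> finite (children T x)"
  by (rule finite_subset[of _ "dom (tpar T)"]) (auto simp: children_def rooted_tree_def)

lemma troot_pair[simp]: "troot (r, p) = r"
  by (simp add: troot_def)

lemma tpar_pair[simp]: "tpar (r, p) = p"
  by (simp add: tpar_def)

lemma tleq_refl[simp]: "tleq T x x"
  by (simp add: tleq_iff_rtrancl)

lemma tleq_trans: "tleq T x y \<Longrightarrow> tleq T y z \<Longrightarrow> tleq T x z"
  unfolding tleq_iff_rtrancl by (rule rtrancl_trans)

lemma tleq_parent: "tpar T x = Some y \<Longrightarrow> tleq T x y"
  unfolding tleq_iff_rtrancl by (rule r_into_rtrancl) simp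

lemma tleq_via_parent: "tleq T y x \<Longrightarrow> y \<noteq> x \<Longrightarrow> \<exists>p. tpar T y = Some p \<and> tleq T p x"
  unfolding tleq_iff_rtrancl by (erule converse_rtranclE) auto

lemma tleq_via_child: "tleq T y x \<Longrightarrow> y \<noteq> x \<Longrightarrow> \<exists>c. tpar T c = Some x \<and> tleq T y c"
  unfolding tleq_iff_rtrancl by (erule rtranclE) auto

lemma tleq_linear_above: "tleq T y a \<Longrightarrow> tleq T y b \<Longrightarrow> tleq T a b \<or> tleq T b a"
  unfolding tleq_iff_rtrancl by (rule single_valued_confluent[OF single_valued_parent_rel])

lemma tleq_parent_of_less: "tleq T y x \<Longrightarrow> y \<noteq> x \<Longrightarrow> tpar T y = Some p \<Longrightarrow> tleq T p x"
  using tleq_via_parent by fastforce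

text \<open>In a functional relation a cycle that can reach a point r can also be continued from r;
  this is what rules out cycles through the root.\<close>
lemma single_valued_cycle_successor:
  assumes sv: "single_valued R" and cyc: "(u, u) \<in> R\<^sup>+" and ur: "(u, r) \<in> R\<^sup>*"
  shows "\<exists>r'. (r, r') \<in> R"
proof -
  have "(r, u) \<in> R\<^sup>*" using ur
  proof (induction rule: rtrancl_induct)
    case base then show ?case by simp
  next
    case (step w w')
    show ?case
    proof (cases "w = u")
      case True
      from cyc obtain u1 where "(u, u1) \<in> R" "(u1, u) \<in> R\<^sup>*"
        using tranclD by metis
      then show ?thesis using step True single_valuedD[OF sv] by metis
    next
      case False
      then obtain w1 where "(w, w1) \<in> R" "(w1, u) \<in> R\<^sup>*"
        using step.IH by (auto elim: converse_rtranclE)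
      then show ?thesis using step single_valuedD[OF sv] by metis
    qed
  qed
  then show ?thesis
    using cyc by (metis converse_rtranclE tranclD)
qed

lemma rooted_tree_acyclic:
  assumes w: "rooted_tree T" and "x \<in> tV T"
  shows "(x, x) \<notin> (parent_rel T)\<^sup>+"
proof
  assume "(x, x) \<in> (parent_rel T)\<^sup>+"
  moreover have "(x, troot T) \<in> (parent_rel T)\<^sup>*"
    using tleq_root[OF w assms(2)] by (simp add: tleq_iff_rtrancl)
  ultimately have "\<exists>r'. (troot T, r') \<in> parent_rel T"
    by (rule single_valued_cycle_successor[OF single_valued_parent_rel])
  then show False using root_parent_None[OF w] by simp
qed

lemma tleq_antisym:
  assumes w: "rooted_tree T" and ab: "tleq T a b" and ba: "tleq T b a"
  shows "a = b"
proof (rule ccontr)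
  assume ne: "a \<noteq> b"
  then have "(a, a) \<in> (parent_rel T)\<^sup>+"
    using ab ba unfolding tleq_iff_rtrancl
    by (metis rtrancl_eq_or_trancl rtrancl_trancl_trancl)
  moreover have "a \<in> tV T"
    using tleq_via_parent[OF ab ne] by (auto simp: tV_def)
  ultimately show False using rooted_tree_acyclic[OF w] by blast
qed

lemma child_neq_parent: "rooted_tree T \<Longrightarrow> tpar T c = Some x \<Longrightarrow> c \<noteq> x"
  using rooted_tree_acyclic[of T c] child_in_tV[of T c x] by fastforce

lemma parent_not_tleq_child: "rooted_tree T \<Longrightarrow> tpar T c = Some x \<Longrightarrow> \<not> tleq T x c"
  using tleq_antisym tleq_parent child_neq_parent by metis

lemma root_maximal: "rooted_tree T \<Longrightarrow> tleq T (troot T) v \<Longrightarrow> v = troot T"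
  using tleq_via_parent root_parent_None by fastforce

lemma siblings_disjoint:
  assumes w: "rooted_tree T" and c1: "tpar T c1 = Some x" and c2: "tpar T c2 = Some x"
    and ne: "c1 \<noteq> c2" and y1: "tleq T y c1" and y2: "tleq T y c2"
  shows False
  using tleq_linear_above[OF y1 y2]
proof
  assume "tleq T c1 c2"
  then show False
    using tleq_parent_of_less[OF _ ne c1] parent_not_tleq_child[OF w c2] by blast
next
  assume "tleq T c2 c1"
  then show False
    using tleq_parent_of_less[OF _ ne[symmetric] c2] parent_not_tleq_child[OF w c1] by blast
qed

definition subtree :: "'a tree \<Rightarrow> 'a \<Rightarrow> 'a set" where
  "subtree T y = {z \<in> tV T. tleq T z y}"

lemma finite_subtree: "rooted_tree T \<Longrightarrow> finite (subtree T y)"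
  unfolding subtree_def by (drule finite_tV) simp

lemma card_subtree_less:
  assumes w: "rooted_tree T" and cy: "tleq T c y" and ne: "c \<noteq> y" and y: "y \<in> tV T"
  shows "card (subtree T c) < card (subtree T y)"
proof (rule psubset_card_mono[OF finite_subtree[OF w]])
  have "y \<notin> subtree T c"
    using tleq_antisym[OF w cy] ne unfolding subtree_def by blast
  moreover have "y \<in> subtree T y" using y by (simp add: subtree_def)
  moreover have "subtree T c \<subseteq> subtree T y"
    unfolding subtree_def using cy by (blast intro: tleq_trans)
  ultimately show "subtree T c \<subset> subtree T y" by blast
qed

lemma card_subtree_child_less:
  "rooted_tree T \<Longrightarrow> tpar T c = Some y \<Longrightarrow> card (subtree T c) < card (subtree T y)"
  by (metis card_subtree_less child_neq_parent parent_in_tV tleq_parent)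

lemma exists_leaf_below:
  assumes w: "rooted_tree T" and "y \<in> tV T"
  shows "\<exists>l\<in>leaves T. tleq T l y"
  using assms(2)
proof (induction "card (subtree T y)" arbitrary: y rule: less_induct)
  case less
  show ?case
  proof (cases "children T y = {}")
    case True
    then show ?thesis unfolding leaves_def using less.prems tleq_refl[of T y] by blast
  next
    case False
    then obtain c where c: "tpar T c = Some y" by (auto simp: children_def)
    with less.hyps[OF card_subtree_child_less[OF w c]] child_in_tV[OF c]
    obtain l where "l \<in> leaves T" "tleq T l c" by blast
    then show ?thesis by (meson tleq_trans tleq_parent[OF c])
  qed
qed

lemma is_tree_card_children:
  assumes "is_tree T" "y \<in> tV T" "y \<noteq> troot T"
  shows "card (children T y) = 0 \<or> card (children T y) = 2"
  using assms unfolding is_tree_def by blast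

lemma is_tree_card_children_root: "is_tree T \<Longrightarrow> card (children T (troot T)) = 1"
  unfolding is_tree_def by blast

lemma is_tree_card_children_parent:
  assumes t: "is_tree T" and y: "y \<in> tV T" "y \<noteq> troot T" and c: "tpar T c = Some y"
  shows "card (children T y) = 2"
proof -
  have "c \<in> children T y" using c by (simp add: children_def)
  moreover have "finite (children T y)" by (rule finite_children[OF is_tree_rooted[OF t]])
  ultimately have "card (children T y) \<noteq> 0" by auto
  then show ?thesis using is_tree_card_children[OF t y] by auto
qed

lemma is_tree_children_pair:
  assumes t: "is_tree T" and pa: "tpar T a = Some x" and pb: "tpar T b = Some x" and ab: "a \<noteq> b"
  shows "x \<noteq> troot T" "children T x = {a, b}"
proof -
  have sub: "{a, b} \<subseteq> children T x" using pa pb by (simp add: children_def)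
  have fin: "finite (children T x)" by (rule finite_children[OF is_tree_rooted[OF t]])
  have "2 \<le> card (children T x)" using card_mono[OF fin sub] ab by simp
  then show xr: "x \<noteq> troot T" using is_tree_card_children_root[OF t] by auto
  have "card (children T x) = 2"
    using is_tree_card_children_parent[OF t parent_in_tV[OF is_tree_rooted[OF t] pa] xr pa] .
  then show "children T x = {a, b}" using card_subset_eq[OF fin sub] ab by simp
qed

section \<open>Restrictions and branch closure\<close>

definition nearest_above :: "'a tree \<Rightarrow> 'a set \<Rightarrow> 'a \<Rightarrow> 'a \<Rightarrow> bool" where
  "nearest_above T W y z \<longleftrightarrow> z \<in> W \<and> tleq T y z \<and> y \<noteq> z \<and>
     (\<forall>w\<in>W. tleq T y w \<and> y \<noteq> w \<longrightarrow> tleq T z w)"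

lemma nearest_aboveI:
  assumes z: "z \<in> W" and yz: "tleq T y z" "y \<noteq> z"
    and between: "\<And>w. w \<in> W \<Longrightarrow> tleq T y w \<Longrightarrow> y \<noteq> w \<Longrightarrow> tleq T w z \<Longrightarrow> w = z"
  shows "nearest_above T W y z"
  unfolding nearest_above_def using assms tleq_linear_above[of T y z] by fastforce

lemma nearest_above_parent:
  assumes w: "rooted_tree T" and yz: "tpar T y = Some z" and z: "z \<in> W"
  shows "nearest_above T W y z"
  using z tleq_parent[OF yz] child_neq_parent[OF w yz]
  by (rule nearest_aboveI) (metis tleq_antisym[OF w] tleq_parent_of_less[OF _ _ yz])

lemma nearest_above_grandparent:
  assumes w: "rooted_tree T" and yu: "tpar T y = Some u" and uz: "tpar T u = Some z"
    and u: "u \<notin> W" and z: "z \<in> W"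
  shows "nearest_above T W y z"
proof (rule nearest_aboveI[OF z])
  show yz: "tleq T y z" using tleq_trans[OF tleq_parent[OF yu] tleq_parent[OF uz]] .
  show "y \<noteq> z"
    using yz tleq_parent[OF yu] parent_not_tleq_child[OF w uz] tleq_trans by metis
  fix v assume "v \<in> W" "tleq T y v" "y \<noteq> v" "tleq T v z"
  moreover have "u \<noteq> v" using u \<open>v \<in> W\<close> by blast
  ultimately show "v = z"
    using tleq_parent_of_less[OF _ _ yu] tleq_parent_of_less[OF _ _ uz] tleq_antisym[OF w] by metis
qed

definition restriction :: "'a tree \<Rightarrow> 'a tree \<Rightarrow> 'a set \<Rightarrow> bool" where
  "restriction T T' W \<longleftrightarrow> troot T' = troot T \<and> dom (tpar T') = W - {troot T} \<and>
     (\<forall>y z. tpar T' y = Some z \<longrightarrow> nearest_above T W y z)"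

lemma restrictionD:
  assumes "restriction T T' W" "tpar T' y = Some z"
  shows "z \<in> W" "tleq T y z" "y \<noteq> z" "\<And>w. w \<in> W \<Longrightarrow> tleq T y w \<Longrightarrow> y \<noteq> w \<Longrightarrow> tleq T z w"
  using assms unfolding restriction_def nearest_above_def by blast+

lemma restriction_root: "restriction T T' W \<Longrightarrow> troot T' = troot T"
  unfolding restriction_def by blast

lemma restriction_dom: "restriction T T' W \<Longrightarrow> dom (tpar T') = W - {troot T}"
  unfolding restriction_def by blast

lemma restriction_tV: "restriction T T' W \<Longrightarrow> troot T \<in> W \<Longrightarrow> tV T' = W"
  unfolding tV_def using restriction_root restriction_dom by (metis insert_Diff)

lemma restriction_tleq_imp:
  assumes r: "restriction T T' W" and h: "tleq T' u v"
  shows "tleq T u v"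
  using h unfolding tleq_iff_rtrancl[of T']
proof (induction rule: rtrancl_induct)
  case base then show ?case by simp
next
  case (step y z)
  then have "tpar T' y = Some z" by simp
  then have "tleq T y z" by (rule restrictionD(2)[OF r])
  then show ?case using tleq_trans[OF step.IH] by blast
qed

lemma restriction_tleq_if:
  assumes w: "rooted_tree T" and r: "restriction T T' W" and WV: "W \<subseteq> tV T" and rW: "troot T \<in> W"
    and v: "v \<in> W"
  shows "u \<in> W \<Longrightarrow> tleq T u v \<Longrightarrow> tleq T' u v"
proof (induction "card (subtree T v) - card (subtree T u)" arbitrary: u rule: less_induct)
  case less
  show ?case
  proof (cases "u = v")
    case True then show ?thesis by simp
  next
    case False
    have "u \<noteq> troot T" using root_maximal[OF w] less.prems(2) False by blast
    then have "u \<in> dom (tpar T')" using restriction_dom[OF r] less.prems(1) by blast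
    then obtain z where z: "tpar T' u = Some z" by blast
    have zW: "z \<in> W" and uz: "tleq T u z" and une: "u \<noteq> z" using restrictionD[OF r z] by auto
    have zv: "tleq T z v" using restrictionD(4)[OF r z v less.prems(2) False] .
    have zV: "z \<in> tV T" using zW WV by blast
    have c1: "card (subtree T u) < card (subtree T z)" by (rule card_subtree_less[OF w uz une zV])
    have "subtree T z \<subseteq> subtree T v" unfolding subtree_def using zv by (blast intro: tleq_trans)
    then have c2: "card (subtree T z) \<le> card (subtree T v)" by (rule card_mono[OF finite_subtree[OF w]])
    have "tleq T' z v"
      by (rule less.hyps[OF _ zW zv]) (use c1 c2 in linarith)
    then show ?thesis using tleq_trans[OF tleq_parent[OF z]] by blast
  qed
qed

lemma restriction_tleq_iff:
  assumes w: "rooted_tree T" and r: "restriction T T' W" and WV: "W \<subseteq> tV T" and rW: "troot T \<in> W"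
    and "u \<in> W" "v \<in> W"
  shows "tleq T' u v \<longleftrightarrow> tleq T u v"
  using restriction_tleq_imp[OF r] restriction_tleq_if[OF w r WV rW] assms(5,6) by blast

lemma restriction_rooted_tree:
  assumes w: "rooted_tree T" and r: "restriction T T' W" and WV: "W \<subseteq> tV T" and rW: "troot T \<in> W"
  shows "rooted_tree T'"
proof -
  have tv: "tV T' = W" by (rule restriction_tV[OF r rW])
  have "finite (dom (tpar T'))" using restriction_dom[OF r] WV finite_tV[OF w]
    by (metis Diff_subset finite_subset)
  moreover have "troot T' \<notin> dom (tpar T')" using restriction_dom[OF r] restriction_root[OF r] by blast
  moreover have "ran (tpar T') \<subseteq> tV T'"
    unfolding tv ran_def using restrictionD(1)[OF r] by blast
  moreover have "\<forall>x\<in>tV T'. tleq T' x (troot T')"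
  proof
    fix x assume "x \<in> tV T'"
    then have xW: "x \<in> W" using tv by simp
    then have "tleq T x (troot T)" using tleq_root[OF w] WV by blast
    then show "tleq T' x (troot T')"
      using restriction_tleq_if[OF w r WV rW rW xW] restriction_root[OF r] by simp
  qed
  ultimately show ?thesis unfolding rooted_tree_def by blast
qed

definition prune :: "'a tree \<Rightarrow> 'a \<Rightarrow> 'a tree" where
  "prune T v = (troot T, \<lambda>y. if tleq T y v then None else tpar T y)"

definition suppress :: "'a tree \<Rightarrow> 'a \<Rightarrow> 'a tree" where
  "suppress T u = (troot T, (\<lambda>y. if tpar T y = Some u then tpar T u else tpar T y)(u := None))"

lemma prune_carrier:
  assumes w: "rooted_tree T" and v: "v \<in> tV T" "v \<noteq> troot T"
  shows "troot T \<in> tV T - subtree T v" "tV T - subtree T v \<subseteq> tV T"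
  using root_maximal[OF w] v by (auto simp: subtree_def)

lemma prune_restriction:
  assumes w: "rooted_tree T" and v: "v \<in> tV T" "v \<noteq> troot T"
  shows "restriction T (prune T v) (tV T - subtree T v)"
  unfolding restriction_def
proof (intro conjI allI impI)
  show "troot (prune T v) = troot T" by (simp add: prune_def)
  show "dom (tpar (prune T v)) = tV T - subtree T v - {troot T}"
    using root_parent_None[OF w] nonroot_has_parent
    by (auto simp: prune_def subtree_def tV_def split: if_splits)
  fix y z assume "tpar (prune T v) y = Some z"
  then have ny: "\<not> tleq T y v" and yz: "tpar T y = Some z"
    by (auto simp: prune_def split: if_splits)
  have "\<not> tleq T z v" using ny tleq_trans[OF tleq_parent[OF yz]] by blast
  then have "z \<in> tV T - subtree T v" using parent_in_tV[OF w yz] by (simp add: subtree_def)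
  then show "nearest_above T (tV T - subtree T v) y z" by (rule nearest_above_parent[OF w yz])
qed

lemma suppress_restriction:
  assumes w: "rooted_tree T" and u: "u \<in> tV T" "u \<noteq> troot T"
  shows "restriction T (suppress T u) (tV T - {u})"
  unfolding restriction_def
proof (intro conjI allI impI)
  obtain pu where pu: "tpar T u = Some pu" using nonroot_has_parent[OF u] by blast
  have P: "tpar (suppress T u) y =
      (if y = u then None else if tpar T y = Some u then Some pu else tpar T y)" for y
    by (simp add: suppress_def pu)
  show "troot (suppress T u) = troot T" by (simp add: suppress_def)
  show "dom (tpar (suppress T u)) = tV T - {u} - {troot T}"
    using root_parent_None[OF w] nonroot_has_parent unfolding P
    by (auto simp: tV_def split: if_splits)
  fix y z assume yz: "tpar (suppress T u) y = Some z"
  have zu: "z \<noteq> u" using yz child_neq_parent[OF w pu] unfolding P by (auto split: if_splits)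
  show "nearest_above T (tV T - {u}) y z"
  proof (cases "tpar T y = Some u")
    case True
    then have "z = pu" using yz unfolding P by (auto split: if_splits)
    then show ?thesis
      using nearest_above_grandparent[OF w True pu] parent_in_tV[OF w pu] zu by blast
  next
    case False
    then have "tpar T y = Some z" using yz unfolding P by (auto split: if_splits)
    then show ?thesis using nearest_above_parent[OF w] parent_in_tV[OF w] zu by blast
  qed
qed

text \<open>The branch points of W, i.e. nodes with two children whose subtrees meet W, lie in W.\<close>
definition branch_closed :: "'a tree \<Rightarrow> 'a set \<Rightarrow> bool" where
  "branch_closed T W \<longleftrightarrow> (\<forall>y\<in>tV T - W. \<forall>c1 c2. tpar T c1 = Some y \<longrightarrow> tpar T c2 = Some y \<longrightarrow>
      (\<exists>w\<in>W. tleq T w c1) \<longrightarrow> (\<exists>w\<in>W. tleq T w c2) \<longrightarrow> c1 = c2)"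

lemma branch_closedD:
  "branch_closed T W \<Longrightarrow> y \<in> tV T \<Longrightarrow> y \<notin> W \<Longrightarrow> tpar T c1 = Some y \<Longrightarrow> tpar T c2 = Some y \<Longrightarrow>
    w1 \<in> W \<Longrightarrow> tleq T w1 c1 \<Longrightarrow> w2 \<in> W \<Longrightarrow> tleq T w2 c2 \<Longrightarrow> c1 = c2"
  unfolding branch_closed_def by blast

lemma branch_closed_common_ancestor:
  assumes w: "rooted_tree T" and sp: "branch_closed T W" and a: "a \<in> W" and b: "b \<in> W"
  shows "m \<in> tV T \<Longrightarrow> tleq T a m \<Longrightarrow> tleq T b m \<Longrightarrow> \<exists>z\<in>W. tleq T a z \<and> tleq T b z \<and> tleq T z m"
proof (induction "card (subtree T m)" arbitrary: m rule: less_induct)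
  case less
  show ?case
  proof (cases "m \<in> W")
    case True then show ?thesis using less.prems by auto
  next
    case False
    then have "a \<noteq> m" "b \<noteq> m" using a b by auto
    obtain ca where ca: "tpar T ca = Some m" "tleq T a ca"
      using tleq_via_child[OF less.prems(2) \<open>a \<noteq> m\<close>] by blast
    obtain cb where cb: "tpar T cb = Some m" "tleq T b cb"
      using tleq_via_child[OF less.prems(3) \<open>b \<noteq> m\<close>] by blast
    have "ca = cb" by (rule branch_closedD[OF sp less.prems(1) False ca(1) cb(1) a ca(2) b cb(2)])
    then have "\<exists>z\<in>W. tleq T a z \<and> tleq T b z \<and> tleq T z ca"
      using less.hyps[OF card_subtree_child_less[OF w ca(1)] child_in_tV[OF ca(1)] ca(2)] cb(2)
      by blast
    then obtain z where "z \<in> W" "tleq T a z" "tleq T b z" "tleq T z ca" by blast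
    moreover have "tleq T z m" using tleq_trans[OF \<open>tleq T z ca\<close> tleq_parent[OF ca(1)]] .
    ultimately show ?thesis by blast
  qed
qed

text \<open>Branch closure passes from T to a restriction T1 of T: two T1-children of y that lie above
  nodes of W both lie above the common ancestor in W of those nodes, which sits strictly below y.\<close>
lemma branch_closed_restriction:
  assumes w: "rooted_tree T" and r: "restriction T T1 W1" and W1: "W1 \<subseteq> tV T" "troot T \<in> W1"
    and WW1: "W \<subseteq> W1" and sp: "branch_closed T W"
  shows "branch_closed T1 W"
  unfolding branch_closed_def
proof (intro ballI allI impI)
  fix y c1 c2
  assume y: "y \<in> tV T1 - W" and p1: "tpar T1 c1 = Some y" and p2: "tpar T1 c2 = Some y"
    and "\<exists>w\<in>W. tleq T1 w c1" "\<exists>w\<in>W. tleq T1 w c2"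
  then obtain w1 w2 where w12: "w1 \<in> W" "w2 \<in> W" "tleq T w1 c1" "tleq T w2 c2"
    using restriction_tleq_imp[OF r] by blast
  have yc: "tleq T c1 y" "tleq T c2 y" using restrictionD(2)[OF r] p1 p2 by blast+
  have yV: "y \<in> tV T" using y restriction_tV[OF r W1(2)] W1(1) by blast
  have "tleq T w1 y" "tleq T w2 y" using tleq_trans[OF w12(3) yc(1)] tleq_trans[OF w12(4) yc(2)] .
  then obtain z where z: "z \<in> W" "tleq T w1 z" "tleq T w2 z" "tleq T z y"
    using branch_closed_common_ancestor[OF w sp w12(1,2) yV] by blast
  have zy: "z \<noteq> y" using z(1) y by blast
  have below: "tleq T z c" if pc: "tpar T1 c = Some y" and wc: "tleq T w c" "tleq T w z" for c w
  proof (rule ccontr)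
    assume "\<not> tleq T z c"
    then have "tleq T c z" "c \<noteq> z" using tleq_linear_above[OF wc] by auto
    then have "tleq T y z" using restrictionD(4)[OF r pc] z(1) WW1 by blast
    then show False using tleq_antisym[OF w z(4)] zy by blast
  qed
  have "tleq T z c1" "tleq T z c2" using below p1 p2 w12(3,4) z(2,3) by blast+
  then have "tleq T c1 c2 \<or> tleq T c2 c1" by (rule tleq_linear_above)
  moreover have "c = c'" if "tleq T c c'" "tpar T1 c = Some y" "tpar T1 c' = Some y" for c c'
  proof (rule ccontr)
    assume "c \<noteq> c'"
    moreover have "c' \<in> W1" using child_in_tV[OF that(3)] restriction_tV[OF r W1(2)] by simp
    ultimately have "tleq T y c'" using restrictionD(4)[OF r that(2)] that(1) by blast
    then show False using tleq_antisym[OF w _ restrictionD(2)[OF r that(3)]] restrictionD(3)[OF r that(3)]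
      by blast
  qed
  ultimately show "c1 = c2" using p1 p2 by metis
qed

text \<open>Conversely, branch closure lifts from a restriction to a branch-closed node set W: a branch
  point y of W' in T outside W is excluded by closure of W; for y in W, the T1-children of y
  above the two witnesses coincide, and this common node lies below both T-children of y.\<close>
lemma branch_closed_of_restriction:
  assumes w: "rooted_tree T" and r: "restriction T T1 W" and W: "W \<subseteq> tV T" "troot T \<in> W"
    and spW: "branch_closed T W" and W'W: "W' \<subseteq> W" and sp1: "branch_closed T1 W'"
  shows "branch_closed T W'"
  unfolding branch_closed_def
proof (intro ballI allI impI)
  fix y c1 c2
  assume y: "y \<in> tV T - W'" and p1: "tpar T c1 = Some y" and p2: "tpar T c2 = Some y"
    and "\<exists>w\<in>W'. tleq T w c1" "\<exists>w\<in>W'. tleq T w c2"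
  then obtain w1 w2 where w12: "w1 \<in> W'" "w2 \<in> W'" "tleq T w1 c1" "tleq T w2 c2" by blast
  show "c1 = c2"
  proof (cases "y \<in> W")
    case False
    then show ?thesis using branch_closedD[OF spW _ _ p1 p2] y w12 W'W by blast
  next
    case True
    have child1: "\<exists>d. tpar T1 d = Some y \<and> tleq T1 wi d \<and> tleq T d c"
      if wi: "wi \<in> W'" "tleq T wi c" and pc: "tpar T c = Some y" for wi c
    proof -
      have "tleq T wi y" using tleq_trans[OF wi(2) tleq_parent[OF pc]] .
      then have "tleq T1 wi y" using restriction_tleq_iff[OF w r W _ True] wi(1) W'W by blast
      moreover have "wi \<noteq> y" using wi(1) y by blast
      ultimately obtain d where d: "tpar T1 d = Some y" "tleq T1 wi d"
        using tleq_via_child[of T1 wi y] by blast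
      have wd: "tleq T wi d" by (rule restriction_tleq_imp[OF r d(2)])
      have dy: "tleq T d y" "d \<noteq> y" using restrictionD(2,3)[OF r d(1)] by auto
      have "tleq T d c"
      proof (rule ccontr)
        assume "\<not> tleq T d c"
        then have "tleq T c d" "c \<noteq> d" using tleq_linear_above[OF wi(2) wd] by auto
        then have "tleq T y d" using tleq_parent_of_less[OF _ _ pc] by blast
        then show False using tleq_antisym[OF w dy(1)] dy(2) by blast
      qed
      then show ?thesis using d by blast
    qed
    obtain d1 where d1: "tpar T1 d1 = Some y" "tleq T1 w1 d1" "tleq T d1 c1"
      using child1[OF w12(1,3) p1] by blast
    obtain d2 where d2: "tpar T1 d2 = Some y" "tleq T1 w2 d2" "tleq T d2 c2"
      using child1[OF w12(2,4) p2] by blast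
    have yV1: "y \<in> tV T1" using restriction_tV[OF r W(2)] True by simp
    have "d1 = d2" using branch_closedD[OF sp1 yV1 _ d1(1) d2(1) w12(1) d1(2) w12(2) d2(2)] y by blast
    then show ?thesis using siblings_disjoint[OF w p1 p2 _ d1(3)] d2(3) by blast
  qed
qed

lemma branch_closed_prune: "branch_closed T (tV T - subtree T v)"
  unfolding branch_closed_def
proof (intro ballI allI impI)
  fix y c1 c2
  assume "y \<in> tV T - (tV T - subtree T v)" and p1: "tpar T c1 = Some y"
    and "\<exists>w\<in>tV T - subtree T v. tleq T w c1"
  then obtain w where "w \<in> tV T" "\<not> tleq T w v" "tleq T w c1" "tleq T y v"
    by (auto simp: subtree_def)
  then show "c1 = c2" using tleq_trans[OF tleq_trans[OF _ tleq_parent[OF p1]]] by blast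
qed

lemma branch_closed_remove_unary:
  "children T u = {c} \<Longrightarrow> branch_closed T (tV T - {u})"
  unfolding branch_closed_def by (metis Diff_iff children_def mem_Collect_eq singletonD)

lemma ext_step_restriction:
  assumes w: "rooted_tree T" and st: "ext_step T T'"
  shows "\<exists>W. restriction T T' W \<and> W \<subseteq> tV T \<and> troot T \<in> W \<and> branch_closed T W"
  using st unfolding ext_step_def
proof
  assume "prune_step T T'"
  then obtain v where v: "v \<in> tV T" "v \<noteq> troot T" and T': "T' = prune T v"
    unfolding prune_step_def prune_def by blast
  show ?thesis
    unfolding T' using prune_restriction[OF w v] prune_carrier[OF w v] branch_closed_prune[of T v]
    by (intro exI[of _ "tV T - subtree T v"] conjI) auto
next
  assume "suppress_step T T'"
  then obtain u c where u: "u \<in> tV T" "u \<noteq> troot T" and ch: "children T u = {c}"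
    and T': "T' = suppress T u"
    unfolding suppress_step_def suppress_def by blast
  show ?thesis
    unfolding T' using suppress_restriction[OF w u] branch_closed_remove_unary[OF ch] u
    by (intro exI[of _ "tV T - {u}"] conjI) auto
qed

section \<open>Extensions as displayed trees\<close>

definition order_agrees :: "'a tree \<Rightarrow> 'a tree \<Rightarrow> bool" where
  "order_agrees G T \<longleftrightarrow> (\<forall>u\<in>tV G. \<forall>v\<in>tV G. tleq G u v \<longleftrightarrow> tleq T u v)"

text \<open>T displays G when G is obtained from T by deleting nodes while keeping the root, the
  ancestor order and the branch points; this characterises extensions (ext_steps_iff_displays).\<close>
definition displays :: "'a tree \<Rightarrow> 'a tree \<Rightarrow> bool" where
  "displays T G \<longleftrightarrow> troot G = troot T \<and> tV G \<subseteq> tV T \<and> order_agrees G T \<and> branch_closed T (tV G)"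

lemma displays_refl: "displays T T"
  by (simp add: displays_def order_agrees_def branch_closed_def)

lemma displays_tleq_iff: "displays T G \<Longrightarrow> u \<in> tV G \<Longrightarrow> v \<in> tV G \<Longrightarrow> tleq G u v \<longleftrightarrow> tleq T u v"
  by (simp add: displays_def order_agrees_def)

lemma displays_restriction_up:
  assumes w: "rooted_tree T" and r: "restriction T T1 W" and W: "W \<subseteq> tV T" "troot T \<in> W"
    and spW: "branch_closed T W" and d: "displays T1 G"
  shows "displays T G"
proof -
  have tv: "tV T1 = W" by (rule restriction_tV[OF r W(2)])
  have sub: "tV G \<subseteq> W" using d tv by (simp add: displays_def)
  show ?thesis
    using d sub W restriction_root[OF r] restriction_tleq_iff[OF w r W]
      branch_closed_of_restriction[OF w r W spW sub]
    unfolding displays_def order_agrees_def by (metis subset_iff)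
qed

lemma displays_restriction_down:
  assumes w: "rooted_tree T" and r: "restriction T T1 W" and W: "W \<subseteq> tV T" "troot T \<in> W"
    and sub: "tV G \<subseteq> W" and d: "displays T G"
  shows "displays T1 G"
  using d sub restriction_tV[OF r W(2)] restriction_root[OF r] restriction_tleq_iff[OF w r W]
    branch_closed_restriction[OF w r W sub]
  unfolding displays_def order_agrees_def by (metis subset_iff)

lemma ext_steps_displays:
  assumes "ext_step\<^sup>*\<^sup>* T G"
  shows "rooted_tree T \<Longrightarrow> displays T G \<and> rooted_tree G"
  using assms
proof (induction rule: converse_rtranclp_induct)
  case base
  then show ?case by (simp add: displays_refl)
next
  case (step T T1)
  obtain W where W: "restriction T T1 W" "W \<subseteq> tV T" "troot T \<in> W" "branch_closed T W"
    using ext_step_restriction[OF step.prems step.hyps(1)] by blast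
  have "rooted_tree T1" by (rule restriction_rooted_tree[OF step.prems W(1-3)])
  then show ?case using step.IH displays_restriction_up[OF step.prems W] by blast
qed

lemma order_agrees_parent:
  assumes wT: "rooted_tree T" and wG: "rooted_tree G" and rt: "troot G = troot T" and tv: "tV G = tV T"
    and ag: "order_agrees G T" and yz: "tpar T y = Some z"
  shows "tpar G y = Some z"
proof -
  have yV: "y \<in> tV G" using child_in_tV[OF yz] tv by simp
  have yr: "y \<noteq> troot G" using yz root_parent_None[OF wT] rt by (metis option.distinct(1))
  obtain z' where z': "tpar G y = Some z'" using nonroot_has_parent[OF yV yr] by blast
  have zV: "z \<in> tV G" using parent_in_tV[OF wT yz] tv by simp
  have z'V: "z' \<in> tV G" by (rule parent_in_tV[OF wG z'])
  have "tleq T y z'" using ag yV z'V tleq_parent[OF z'] unfolding order_agrees_def by blast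
  then have a: "tleq T z z'" using tleq_parent_of_less[OF _ child_neq_parent[OF wG z'] yz] by blast
  have "tleq G y z" using ag yV zV tleq_parent[OF yz] unfolding order_agrees_def by blast
  then have "tleq G z' z" using tleq_parent_of_less[OF _ child_neq_parent[OF wT yz] z'] by blast
  then have "tleq T z' z" using ag zV z'V unfolding order_agrees_def by blast
  then have "z = z'" using tleq_antisym[OF wT a] by blast
  then show ?thesis using z' by simp
qed

lemma displays_eq:
  assumes wT: "rooted_tree T" and wG: "rooted_tree G" and d: "displays T G" and sub: "tV T \<subseteq> tV G"
  shows "G = T"
proof -
  have rt: "troot G = troot T" and tv: "tV G = tV T" and ag: "order_agrees G T"
    using d sub unfolding displays_def by auto
  then have ag': "order_agrees T G" unfolding order_agrees_def by blast
  have "tpar G y = tpar T y" for y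
    using order_agrees_parent[OF wT wG rt tv ag, of y]
      order_agrees_parent[OF wG wT rt[symmetric] tv[symmetric] ag', of y]
    by (cases "tpar T y"; cases "tpar G y") auto
  then show ?thesis using rt unfolding troot_def tpar_def by (simp add: prod_eq_iff fun_eq_iff)
qed

lemma single_child_outside_displayed:
  assumes d: "displays T G" and above: "\<And>c. c \<in> tV T \<Longrightarrow> \<exists>g\<in>tV G. tleq T g c"
    and y: "y \<in> tV T" "y \<notin> tV G"
  obtains c0 where "children T y = {c0}"
proof -
  obtain g where g: "g \<in> tV G" "tleq T g y" using above[OF y(1)] by blast
  have "g \<noteq> y" using g(1) y(2) by blast
  then obtain c0 where c0: "tpar T c0 = Some y" "tleq T g c0"
    using tleq_via_child[OF g(2)] by blast
  have "children T y = {c0}"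
  proof (intro equalityI subsetI)
    fix c assume "c \<in> children T y"
    then have pc: "tpar T c = Some y" by (simp add: children_def)
    obtain g' where g': "g' \<in> tV G" "tleq T g' c" using above[OF child_in_tV[OF pc]] by blast
    have "branch_closed T (tV G)" using d by (simp add: displays_def)
    then show "c \<in> {c0}" using branch_closedD[OF _ y pc c0(1) g' g(1) c0(2)] by blast
  qed (simp add: c0(1) children_def)
  then show thesis using that by blast
qed

text \<open>If some node outside G has no node of G below it, its subtree can be pruned; otherwise,
  by branch closure, every node outside G has a single child and can be suppressed.\<close>
lemma ext_step_towards_displayed:
  assumes w: "rooted_tree T" and d: "displays T G" and ne: "\<not> tV T \<subseteq> tV G"
  shows "\<exists>T1 W. ext_step T T1 \<and> restriction T T1 W \<and> W \<subseteq> tV T \<and> troot T \<in> W \<and>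
    tV G \<subseteq> W \<and> W \<noteq> tV T"
proof -
  have nonroot: "y \<noteq> troot T" if "y \<notin> tV G" for y
    using d that troot_in_tV[of G] by (auto simp: displays_def)
  show ?thesis
  proof (cases "\<exists>y\<in>tV T - tV G. \<not> (\<exists>g\<in>tV G. tleq T g y)")
    case True
    then obtain y where y: "y \<in> tV T" "y \<notin> tV G" and none: "\<not> (\<exists>g\<in>tV G. tleq T g y)"
      by blast
    note yr = nonroot[OF y(2)]
    have "ext_step T (prune T y)"
      unfolding ext_step_def prune_step_def prune_def using y(1) yr by blast
    moreover have "tV G \<subseteq> tV T - subtree T y"
      using none d unfolding displays_def subtree_def by blast
    moreover have "y \<in> subtree T y" using y(1) by (simp add: subtree_def)
    ultimately show ?thesis
      using prune_restriction[OF w y(1) yr] prune_carrier[OF w y(1) yr] y(1)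
      by (intro exI[of _ "prune T y"] exI[of _ "tV T - subtree T y"]) auto
  next
    case False
    then have above: "\<exists>g\<in>tV G. tleq T g c" if "c \<in> tV T" for c
      using that tleq_refl[of T c] by (cases "c \<in> tV G") blast+
    obtain y where y: "y \<in> tV T" "y \<notin> tV G" using ne by blast
    note yr = nonroot[OF y(2)]
    obtain c0 where "children T y = {c0}"
      using single_child_outside_displayed[OF d _ y] above by blast
    then have "ext_step T (suppress T y)"
      unfolding ext_step_def suppress_step_def suppress_def using y(1) yr by blast
    then show ?thesis
      using suppress_restriction[OF w y(1) yr] y yr d
      by (intro exI[of _ "suppress T y"] exI[of _ "tV T - {y}"]) (auto simp: displays_def)
  qed
qed

lemma displays_ext_steps:
  assumes wG: "rooted_tree G"
  shows "rooted_tree T \<Longrightarrow> displays T G \<Longrightarrow> ext_step\<^sup>*\<^sup>* T G"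
proof (induction "card (tV T - tV G)" arbitrary: T rule: less_induct)
  case less
  show ?case
  proof (cases "tV T \<subseteq> tV G")
    case True
    then show ?thesis using displays_eq[OF less.prems(1) wG less.prems(2)] by simp
  next
    case False
    then obtain T1 W where st: "ext_step T T1" and r: "restriction T T1 W"
      and W: "W \<subseteq> tV T" "troot T \<in> W" and sub: "tV G \<subseteq> W" and ne: "W \<noteq> tV T"
      using ext_step_towards_displayed[OF less.prems] by blast
    have tv: "tV T1 = W" by (rule restriction_tV[OF r W(2)])
    have "tV T1 - tV G \<subset> tV T - tV G" using tv W sub ne by blast
    then have "card (tV T1 - tV G) < card (tV T - tV G)"
      using finite_tV[OF less.prems(1)] by (meson finite_Diff psubset_card_mono)
    moreover have "rooted_tree T1" by (rule restriction_rooted_tree[OF less.prems(1) r W])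
    moreover have "displays T1 G" by (rule displays_restriction_down[OF less.prems(1) r W sub less.prems(2)])
    ultimately have "ext_step\<^sup>*\<^sup>* T1 G" by (rule less.hyps)
    then show ?thesis by (rule converse_rtranclp_into_rtranclp[of ext_step, OF st])
  qed
qed

lemma ext_steps_iff_displays:
  "rooted_tree T \<Longrightarrow> rooted_tree G \<Longrightarrow> ext_step\<^sup>*\<^sup>* T G \<longleftrightarrow> displays T G"
  using ext_steps_displays displays_ext_steps by blast

lemma between_child_parent:
  assumes w: "rooted_tree T" and ax: "tpar T a = Some x" and az: "tleq T a z" and zx: "tleq T z x"
  shows "z = a \<or> z = x"
  using tleq_parent_of_less[OF az _ ax] tleq_antisym[OF w zx] by blast

lemma displayed_children_split:
  assumes wT: "rooted_tree T" and wG: "rooted_tree G" and d: "displays T G"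
    and pa: "tpar G a = Some x" and pb: "tpar G b = Some x" and ab: "a \<noteq> b"
  obtains c1 c2 where "tpar T c1 = Some x" "tpar T c2 = Some x" "c1 \<noteq> c2" "tleq T a c1" "tleq T b c2"
proof -
  have aG: "a \<in> tV G" and bG: "b \<in> tV G" and xG: "x \<in> tV G"
    using child_in_tV[OF pa] child_in_tV[OF pb] parent_in_tV[OF wG pa] .
  have "tleq T a x" "tleq T b x"
    using displays_tleq_iff[OF d] aG bG xG tleq_parent[OF pa] tleq_parent[OF pb] by blast+
  then obtain c1 c2 where c1: "tpar T c1 = Some x" "tleq T a c1" and c2: "tpar T c2 = Some x" "tleq T b c2"
    using tleq_via_child[of T a x] tleq_via_child[of T b x] child_neq_parent[OF wG pa]
      child_neq_parent[OF wG pb] by blast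
  have "c1 \<noteq> c2"
  proof
    assume "c1 = c2"
    moreover have "branch_closed T (tV G)" using d by (simp add: displays_def)
    ultimately obtain z where z: "z \<in> tV G" "tleq T a z" "tleq T b z" "tleq T z c1"
      using branch_closed_common_ancestor[OF wT _ aG bG child_in_tV[OF c1(1)] c1(2)] c2(2) by blast
    have "tleq T z x" "z \<noteq> x"
      using tleq_trans[OF z(4) tleq_parent[OF c1(1)]] z(4) parent_not_tleq_child[OF wT c1(1)] by auto
    moreover have "tleq G a z" "tleq G b z" "tleq G z x"
      using displays_tleq_iff[OF d] z aG bG xG \<open>tleq T z x\<close> by blast+
    ultimately show False
      using between_child_parent[OF wG pa] between_child_parent[OF wG pb] ab by blast
  qed
  then show thesis using that c1 c2 by blast
qed

lemma extension_displays: "is_extension G' G \<Longrightarrow> displays G' G"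
  using ext_steps_displays is_tree_rooted unfolding is_extension_def by blast

section \<open>Regrafting\<close>

definition dropped :: "'a tree \<Rightarrow> 'a \<Rightarrow> 'a \<Rightarrow> 'a \<Rightarrow> 'a set" where
  "dropped T x d e = {y \<in> tV T. tleq T y x \<and> y \<noteq> x \<and> \<not> tleq T y d \<and> \<not> tleq T y e}"

definition regraft :: "'a tree \<Rightarrow> 'a \<Rightarrow> 'a \<Rightarrow> 'a \<Rightarrow> 'a tree" where
  "regraft T x d e = (troot T, \<lambda>y. if y \<in> dropped T x d e then None
     else if y = d \<or> y = e then Some x else tpar T y)"

locale regraft_setting =
  fixes T :: "'a tree" and x d e :: 'a
  assumes rooted: "rooted_tree T"
    and dx: "tleq T d x" "d \<noteq> x" and ex: "tleq T e x" "e \<noteq> x"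
    and incomparable: "\<not> tleq T d e" "\<not> tleq T e d"
begin

abbreviation "D \<equiv> dropped T x d e"
abbreviation "T' \<equiv> regraft T x d e"

lemma tpar_regraft:
  "tpar T' y = (if y \<in> D then None else if y = d \<or> y = e then Some x else tpar T y)"
  by (simp add: regraft_def)

lemma not_dropped: "y \<in> tV T \<Longrightarrow> tleq T y x \<Longrightarrow> y \<noteq> x \<Longrightarrow> y \<notin> D \<Longrightarrow> tleq T y d \<or> tleq T y e"
  unfolding dropped_def by blast

lemma x_in_tV: "x \<in> tV T"
  using tleq_via_child[OF dx] parent_in_tV[OF rooted] by blast

lemma root_not_dropped: "troot T \<notin> D"
  using root_maximal[OF rooted] unfolding dropped_def by blast

lemma x_d_e_not_dropped: "d \<notin> D" "e \<notin> D" "x \<notin> D"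
  unfolding dropped_def by auto

lemma d_e_in_tV: "d \<in> tV T" "e \<in> tV T"
  using tleq_via_parent[OF dx] tleq_via_parent[OF ex] by (auto simp: tV_def)

lemma d_e_nonroot: "d \<noteq> troot T" "e \<noteq> troot T"
  using dx ex tleq_antisym[OF rooted _ tleq_root[OF rooted x_in_tV]] by fastforce+

lemma d_neq_e: "d \<noteq> e"
  using incomparable by auto

lemma parent_of_d_e_dropped:
  assumes "tpar T c = Some y" "c = d \<or> c = e" "y \<noteq> x"
  shows "y \<in> D"
proof -
  have "tleq T y x" using assms(2) dx ex tleq_parent_of_less[OF _ _ assms(1)] by blast
  moreover have "\<not> tleq T y d" "\<not> tleq T y e"
    using assms(2) incomparable parent_not_tleq_child[OF rooted assms(1)]
      tleq_trans[OF tleq_parent[OF assms(1)]] by blast+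
  ultimately show ?thesis
    unfolding dropped_def using assms(3) parent_in_tV[OF rooted assms(1)] by blast
qed

lemma dom_tpar_regraft: "dom (tpar T') = tV T - D - {troot T}"
proof (intro equalityI subsetI)
  fix y assume "y \<in> dom (tpar T')"
  then obtain z where "tpar T' y = Some z" by blast
  then have yD: "y \<notin> D" and y: "y = d \<or> y = e \<or> tpar T y = Some z"
    unfolding tpar_regraft by (auto split: if_splits)
  have "y \<in> tV T" using y d_e_in_tV child_in_tV[of T y z] by blast
  moreover have "y \<noteq> troot T"
    using y d_e_nonroot root_parent_None[OF rooted] by (metis option.distinct(1))
  ultimately show "y \<in> tV T - D - {troot T}" using yD by (meson DiffI singletonD)
next
  fix y assume y: "y \<in> tV T - D - {troot T}"
  then obtain z where "tpar T y = Some z" using nonroot_has_parent[of y T] by blast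
  then show "y \<in> dom (tpar T')" using y unfolding tpar_regraft by auto
qed

lemma nearest_above_regraft:
  assumes yz: "tpar T' y = Some z"
  shows "nearest_above T (tV T - D) y z"
proof -
  have yD: "y \<notin> D" using yz unfolding tpar_regraft by (auto split: if_splits)
  show ?thesis
  proof (cases "y = d \<or> y = e")
    case True
    then have z: "z = x" using yz yD unfolding tpar_regraft by auto
    show ?thesis unfolding z
    proof (rule nearest_aboveI)
      show "x \<in> tV T - D" using x_in_tV x_d_e_not_dropped by blast
    next
      show "tleq T y x" "y \<noteq> x" using True dx ex by auto
    next
      fix w assume w: "w \<in> tV T - D" "tleq T y w" "y \<noteq> w" "tleq T w x"
      show "w = x"
      proof (rule ccontr)
        assume "w \<noteq> x"
        then have "tleq T w d \<or> tleq T w e" using not_dropped w by blast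
        then show False
          using True w(3) incomparable tleq_antisym[OF rooted w(2)]
            tleq_trans[OF w(2), of d] tleq_trans[OF w(2), of e] by blast
      qed
    qed
  next
    case False
    then have yz': "tpar T y = Some z" using yz yD unfolding tpar_regraft by auto
    have "z \<notin> D"
    proof
      assume zD: "z \<in> D"
      then have "tleq T y x" "y \<noteq> x"
        using tleq_trans[OF tleq_parent[OF yz']] parent_not_tleq_child[OF rooted yz']
        unfolding dropped_def by blast+
      then have "tleq T y d \<or> tleq T y e" using not_dropped child_in_tV[OF yz'] yD by blast
      then show False
        using zD False tleq_parent_of_less[OF _ _ yz'] unfolding dropped_def by blast
    qed
    then show ?thesis
      using nearest_above_parent[OF rooted yz'] parent_in_tV[OF rooted yz'] by blast
  qed
qed

lemma regraft_restriction: "restriction T T' (tV T - D)"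
  unfolding restriction_def using dom_tpar_regraft nearest_above_regraft
  by (simp add: regraft_def)

lemma tV_regraft: "tV T' = tV T - D"
  using restriction_tV[OF regraft_restriction] root_not_dropped troot_in_tV by blast

lemma rooted_tree_regraft: "rooted_tree T'"
  using restriction_rooted_tree[OF rooted regraft_restriction] root_not_dropped troot_in_tV by blast

lemma children_regraft_x: "children T' x = {d, e}"
proof -
  have "tpar T' c = Some x \<longleftrightarrow> c = d \<or> c = e" for c
  proof
    assume h: "tpar T' c = Some x"
    then have cD: "c \<notin> D" unfolding tpar_regraft by (auto split: if_splits)
    show "c = d \<or> c = e"
    proof (rule ccontr)
      assume nde: "\<not> (c = d \<or> c = e)"
      then have pc: "tpar T c = Some x" using h cD unfolding tpar_regraft by auto
      have "tleq T c d \<or> tleq T c e"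
        using not_dropped[OF child_in_tV[OF pc] tleq_parent[OF pc] child_neq_parent[OF rooted pc] cD] .
      then show False
        using tleq_parent_of_less[OF _ _ pc] nde tleq_antisym[OF rooted] dx ex by metis
    qed
  next
    assume "c = d \<or> c = e"
    then show "tpar T' c = Some x" using x_d_e_not_dropped unfolding tpar_regraft by auto
  qed
  then show ?thesis unfolding children_def by blast
qed

lemma children_regraft_other:
  assumes y: "y \<in> tV T - D" "y \<noteq> x"
  shows "children T' y = children T y"
proof -
  have "tpar T' c = Some y \<longleftrightarrow> tpar T c = Some y" for c
  proof
    assume h: "tpar T' c = Some y"
    then have "c \<notin> D" "\<not> (c = d \<or> c = e)" using y(2) unfolding tpar_regraft by (auto split: if_splits)
    then show "tpar T c = Some y" using h unfolding tpar_regraft by auto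
  next
    assume h: "tpar T c = Some y"
    have "c \<notin> D"
    proof
      assume cD: "c \<in> D"
      then have "tleq T y x"
        using tleq_parent_of_less[OF _ _ h] unfolding dropped_def by blast
      then have "tleq T y d \<or> tleq T y e" using not_dropped y by blast
      then show False using cD tleq_trans[OF tleq_parent[OF h]] unfolding dropped_def by blast
    qed
    moreover have "\<not> (c = d \<or> c = e)" using parent_of_d_e_dropped[OF h _ y(2)] y(1) by blast
    ultimately show "tpar T' c = Some y" using h unfolding tpar_regraft by auto
  qed
  then show ?thesis unfolding children_def by blast
qed

lemma is_tree_regraft:
  assumes t: "is_tree T" and xr: "x \<noteq> troot T"
  shows "is_tree T'"
proof -
  have root': "troot T' = troot T" by (simp add: regraft_def)
  have "card (children T' (troot T')) = 1"
    using children_regraft_other[of "troot T"] root_not_dropped xr is_tree_card_children_root[OF t]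
    unfolding root' by simp
  moreover have "card (children T' y) = 0 \<or> card (children T' y) = 2"
    if "y \<in> tV T' - {troot T'}" for y
    using that children_regraft_x d_neq_e children_regraft_other[of y]
      is_tree_card_children[OF t, of y] unfolding tV_regraft root' by (cases "y = x") auto
  ultimately show ?thesis
    using rooted_tree_regraft unfolding is_tree_def rooted_tree_def by blast
qed

lemma leaves_regraft: "leaves T' \<subseteq> leaves T - D"
  using children_regraft_x children_regraft_other unfolding leaves_def tV_regraft by fastforce

lemma displayed_not_dropped:
  assumes wG: "rooted_tree G" and disp: "displays T G" and pa: "tpar G a = Some x"
    and ch: "children G x = {a, b}" and ad: "tleq T a d" and be: "tleq T b e"
  shows "tV G \<inter> D = {}"
proof -
  have "g \<notin> D" if g: "g \<in> tV G" for g
  proof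
    assume "g \<in> D"
    then have gx: "tleq T g x" "g \<noteq> x" and ng: "\<not> tleq T g d" "\<not> tleq T g e"
      unfolding dropped_def by blast+
    have "tleq G g x"
      using gx(1) displays_tleq_iff[OF disp g parent_in_tV[OF wG pa]] by blast
    then obtain h where h: "tpar G h = Some x" "tleq G g h" using tleq_via_child[of G g x] gx(2) by blast
    have "h \<in> children G x" using h(1) by (simp add: children_def)
    then have "h = a \<or> h = b" using ch by blast
    then have "tleq T g a \<or> tleq T g b"
      using h(2) displays_tleq_iff[OF disp g child_in_tV[OF h(1)]] by blast
    then show False using ng tleq_trans[OF _ ad, of g] tleq_trans[OF _ be, of g] by blast
  qed
  then show ?thesis by blast
qed

text \<open>The sibling subtree of d below its old parent p is dropped, and it contains a leaf.\<close>
lemma exists_dropped_leaf: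
  assumes t: "is_tree T" and dp: "tpar T d = Some p" and px: "p \<noteq> x" and ep: "\<not> tleq T e p"
  obtains l where "l \<in> leaves T" "l \<in> D"
proof -
  have pD: "p \<in> D" by (rule parent_of_d_e_dropped[OF dp _ px]) simp
  then have pnr: "p \<noteq> troot T" using root_not_dropped by blast
  have "card (children T p) = 2"
    using is_tree_card_children_parent[OF t parent_in_tV[OF rooted dp] pnr dp] .
  then obtain u v where "children T p = {u, v}" "u \<noteq> v" by (meson card_2_iff)
  then obtain q where "q \<in> children T p" and qd: "q \<noteq> d" by (metis insertCI)
  then have pq: "tpar T q = Some p" by (simp add: children_def)
  obtain l where l: "l \<in> leaves T" "tleq T l q"
    using exists_leaf_below[OF rooted child_in_tV[OF pq]] by blast
  have lp: "tleq T l p" using tleq_trans[OF l(2) tleq_parent[OF pq]] .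
  have px': "tleq T p x" using pD unfolding dropped_def by blast
  have "tleq T l x" using tleq_trans[OF lp px'] .
  moreover have "l \<noteq> x" using lp tleq_antisym[OF rooted px'] px by blast
  moreover have "\<not> tleq T l d" using siblings_disjoint[OF rooted pq dp qd l(2)] by blast
  moreover have "\<not> tleq T l e"
  proof
    assume "tleq T l e"
    then have "tleq T e q \<or> tleq T q e" using tleq_linear_above[OF _ l(2)] by blast
    then show False
    proof
      assume "tleq T e q"
      then show False using ep tleq_trans[OF _ tleq_parent[OF pq]] by blast
    next
      assume qe: "tleq T q e"
      show False
      proof (cases "q = e")
        case True
        then show False using ep tleq_parent[OF pq] by simp
      next
        case False
        then have "tleq T p e" using tleq_parent_of_less[OF qe _ pq] by blast
        then show False using incomparable(1) tleq_trans[OF tleq_parent[OF dp]] by blast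
      qed
    qed
  qed
  ultimately have "l \<in> D" using l(1) unfolding leaves_def dropped_def by blast
  then show thesis using that l(1) by blast
qed

end

section \<open>Reconciliations\<close>

lemma consistent_parent_image:
  assumes t: "is_tree T" and c: "consistent T S \<rho>" and py: "tpar T y = Some p" and p: "p \<noteq> troot T"
  shows "\<rho> y = \<rho> p \<or> \<rho> y \<in> children S (\<rho> p)"
proof -
  have pV: "p \<in> tV T" by (rule parent_in_tV[OF is_tree_rooted[OF t] py])
  have "card (children T p) = 2" by (rule is_tree_card_children_parent[OF t pV p py])
  then have "is_dup T S \<rho> p \<or> is_spec T S \<rho> p" using c pV unfolding consistent_def by blast
  moreover have "y \<in> children T p" using py by (simp add: children_def)
  ultimately show ?thesis unfolding is_dup_def is_spec_def by blast
qed

lemma consistent_mono: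
  assumes t: "is_tree T" and wS: "rooted_tree S" and c: "consistent T S \<rho>" and h: "tleq T y z"
  shows "tleq S (\<rho> y) (\<rho> z)"
  using h unfolding tleq_iff_rtrancl[of T]
proof (induction rule: converse_rtrancl_induct)
  case base then show ?case by simp
next
  case (step y p)
  have py: "tpar T y = Some p" using step.hyps(1) by simp
  have "tleq S (\<rho> y) (\<rho> p)"
  proof (cases "p = troot T")
    case True
    then have "\<rho> p = troot S" "\<rho> y \<in> tV S"
      using c child_in_tV[OF py] unfolding consistent_def by auto
    then show ?thesis using tleq_root[OF wS] by simp
  next
    case False
    then show ?thesis
      using consistent_parent_image[OF t c py] tleq_parent[of S "\<rho> y" "\<rho> p"]
      by (auto simp: children_def)
  qed
  then show ?case using tleq_trans[OF _ step.IH] by blast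
qed

lemma lca_least_upper_bound:
  assumes wS: "rooted_tree S" and A: "A \<subseteq> tV S" "A \<noteq> {}"
  shows "lca S A \<in> tV S \<and> (\<forall>a\<in>A. tleq S a (lca S A)) \<and>
    (\<forall>y\<in>tV S. (\<forall>a\<in>A. tleq S a y) \<longrightarrow> tleq S (lca S A) y)"
proof -
  define U where "U = {y \<in> tV S. \<forall>a\<in>A. tleq S a y}"
  have "troot S \<in> U" unfolding U_def using A tleq_root[OF wS] by auto
  then obtain z where z: "z \<in> U" and zmin: "\<And>y. y \<in> U \<Longrightarrow> card (subtree S z) \<le> card (subtree S y)"
    using ex_has_least_nat[of "\<lambda>y. y \<in> U" "troot S" "\<lambda>y. card (subtree S y)"] by blast
  obtain a0 where a0: "a0 \<in> A" using A by blast
  have least: "tleq S z y" if y: "y \<in> U" for y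
  proof -
    have "tleq S a0 z" "tleq S a0 y" using z y a0 unfolding U_def by auto
    then have "tleq S z y \<or> tleq S y z" by (rule tleq_linear_above)
    then show ?thesis
    proof
      assume yz: "tleq S y z"
      show ?thesis
      proof (cases "y = z")
        case True then show ?thesis by simp
      next
        case False
        have "z \<in> tV S" using z U_def by simp
        then have "card (subtree S y) < card (subtree S z)" using card_subtree_less[OF wS yz False] by blast
        then show ?thesis using zmin[OF y] by simp
      qed
    qed
  qed
  define P where "P x = (x \<in> tV S \<and> (\<forall>a\<in>A. tleq S a x) \<and>
                 (\<forall>y\<in>tV S. (\<forall>a\<in>A. tleq S a y) \<longrightarrow> tleq S x y))" for x
  have Pz: "P z" unfolding P_def using z least unfolding U_def by blast
  have uniq: "x = z" if "P x" for x
  proof -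
    have "tleq S x z" using that z unfolding P_def U_def by blast
    moreover have "tleq S z x" using that least unfolding P_def U_def by blast
    ultimately show ?thesis using tleq_antisym[OF wS] by blast
  qed
  have "lca S A = z" unfolding lca_def using the_equality[of P z] Pz uniq unfolding P_def by blast
  then show ?thesis using Pz unfolding P_def by simp
qed

lemma exists_change_edge:
  assumes "tleq T a c" "f a \<noteq> s" "f c = s"
  shows "\<exists>d p. tleq T a d \<and> tpar T d = Some p \<and> tleq T p c \<and> f d \<noteq> s \<and> f p = s"
  using assms(1,2) unfolding tleq_iff_rtrancl[of T]
proof (induction rule: converse_rtrancl_induct)
  case base then show ?case using assms(3) by simp
next
  case (step a a1)
  show ?case
  proof (cases "f a1 = s")
    case True
    then show ?thesis using step.hyps step.prems tleq_iff_rtrancl[of T a1 c] by auto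
  next
    case False
    then obtain d p where dp: "tleq T a1 d" "tpar T d = Some p" "tleq T p c" "f d \<noteq> s" "f p = s"
      using step.IH[OF False] unfolding tleq_iff_rtrancl by blast
    have "tleq T a a1" using step.hyps(1) by (simp add: tleq_parent)
    then have "tleq T a d" using tleq_trans[OF _ dp(1)] by blast
    then show ?thesis using dp unfolding tleq_iff_rtrancl by blast
  qed
qed

lemma exists_edge_into_child:
  assumes t: "is_tree T" and wS: "rooted_tree S" and c: "consistent T S \<rho>"
    and ac: "tleq T a c" and cr: "c \<noteq> troot T" and at: "tleq S (\<rho> a) t" and ts: "tpar S t = Some (\<rho> c)"
  obtains d p where "tleq T a d" "tpar T d = Some p" "tleq T p c" "\<rho> d = t" "\<rho> p = \<rho> c"
proof -
  have "\<rho> a \<noteq> \<rho> c"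
    using at parent_not_tleq_child[OF wS ts] by auto
  then obtain d p where dp: "tleq T a d" "tpar T d = Some p" "tleq T p c" "\<rho> d \<noteq> \<rho> c" "\<rho> p = \<rho> c"
    using exists_change_edge[OF ac, of \<rho> "\<rho> c"] by blast
  have "p \<noteq> troot T" using dp(3) cr root_maximal[OF is_tree_rooted[OF t]] by blast
  then have "tpar S (\<rho> d) = Some (\<rho> c)"
    using consistent_parent_image[OF t c dp(2)] dp(4,5) by (simp add: children_def)
  moreover have "tleq S (\<rho> a) (\<rho> d)" by (rule consistent_mono[OF t wS c dp(1)])
  ultimately have "\<rho> d = t" using siblings_disjoint[OF wS _ ts _ _ at] by blast
  then show thesis using that dp by blast
qed

lemma (in regraft_setting) dl_reconciliation_regraft:
  assumes dl: "dl_reconciliation G T S \<phi> \<rho>" and xr: "x \<noteq> troot T" and GD: "tV G \<inter> D = {}"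
    and spec: "children S (\<rho> x) = {\<rho> d, \<rho> e}" "\<rho> d \<noteq> \<rho> e"
  shows "dl_reconciliation G T' S \<phi> \<rho>"
proof -
  have tS: "is_tree S" and ext: "is_extension T G" and cons: "consistent T S \<rho>"
    and lv: "\<forall>l\<in>leaves G. \<rho> l = \<phi> l"
    using dl unfolding dl_reconciliation_def by blast+
  have tT: "is_tree T" and tG: "is_tree G" using ext unfolding is_extension_def by blast+
  have tT': "is_tree T'" by (rule is_tree_regraft[OF tT xr])
  have "tV G \<subseteq> tV T - D" using extension_displays[OF ext] GD unfolding displays_def by blast
  then have "displays T' G"
    using displays_restriction_down[OF rooted regraft_restriction _ _ _ extension_displays[OF ext]]
      root_not_dropped troot_in_tV[of T] by blast
  then have ext': "is_extension T' G"
    using ext_steps_iff_displays is_tree_rooted tT' tG unfolding is_extension_def by blast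
  have root': "troot T' = troot T" by (simp add: regraft_def)
  have "is_dup T' S \<rho> y \<or> is_spec T' S \<rho> y" if y: "y \<in> tV T'" "card (children T' y) = 2" for y
  proof (cases "y = x")
    case True
    have "is_spec T' S \<rho> x"
      unfolding is_spec_def children_regraft_x using spec d_neq_e by auto
    then show ?thesis using True by blast
  next
    case False
    then have "children T' y = children T y" using children_regraft_other y(1) tV_regraft by blast
    moreover have "y \<in> tV T" using y(1) tV_regraft by blast
    ultimately show ?thesis using cons y(2) unfolding consistent_def is_dup_def is_spec_def by auto
  qed
  then have "consistent T' S \<rho>"
    using cons root' tV_regraft unfolding consistent_def by auto
  then show ?thesis using tS ext' lv unfolding dl_reconciliation_def by blast
qed

lemma (in regraft_setting) card_losses_regraft_less:
  assumes GD: "tV G \<inter> D = {}" and l: "l \<in> leaves T" "l \<in> D"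
  shows "card (losses G T') < card (losses G T)"
proof (rule psubset_card_mono)
  show "finite (losses G T)"
    using finite_tV[OF rooted] unfolding losses_def leaves_def by (rule finite_subset[rotated]) blast
  have "l \<notin> leaves G" using GD l(2) unfolding leaves_def by blast
  then show "losses G T' \<subset> losses G T"
    using leaves_regraft l unfolding losses_def by blast
qed

text \<open>Walking up from the children a and b of a duplication x, the images enter rho x from
  different children t1 and t2; the last nodes d and e before that are incomparable.\<close>
lemma duplication_regraft_points:
  assumes dl: "dl_reconciliation G T S \<phi> \<rho>"
    and pa: "tpar G a = Some x" and pb: "tpar G b = Some x" and ab: "a \<noteq> b"
    and pt1: "tpar S t1 = Some (\<rho> x)" and pt2: "tpar S t2 = Some (\<rho> x)"
    and at: "tleq S (\<rho> a) t1" and bt: "tleq S (\<rho> b) t2" and dup: "is_dup T S \<rho> x"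
  obtains d p e where "regraft_setting T x d e" "tleq T a d" "tleq T b e"
    "tpar T d = Some p" "p \<noteq> x" "\<not> tleq T e p" "\<rho> d = t1" "\<rho> e = t2"
proof -
  have tS: "is_tree S" and ext: "is_extension T G" and cons: "consistent T S \<rho>"
    using dl unfolding dl_reconciliation_def by blast+
  have tT: "is_tree T" and tG: "is_tree G" using ext unfolding is_extension_def by blast+
  have wS: "rooted_tree S" and wT: "rooted_tree T" and wG: "rooted_tree G"
    using tS tT tG by (simp_all add: is_tree_rooted)
  obtain c1 c2 where c1: "tpar T c1 = Some x" "tleq T a c1" and c2: "tpar T c2 = Some x" "tleq T b c2"
    and c12: "c1 \<noteq> c2"
    using displayed_children_split[OF wT wG extension_displays[OF ext] pa pb ab] by blast
  have "\<rho> c1 = \<rho> x" "\<rho> c2 = \<rho> x" using dup c1(1) c2(1) unfolding is_dup_def children_def by auto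
  then have t1: "tpar S t1 = Some (\<rho> c1)" and t2: "tpar S t2 = Some (\<rho> c2)" using pt1 pt2 by simp_all
  have c1r: "c1 \<noteq> troot T" and c2r: "c2 \<noteq> troot T"
    using c1(1) c2(1) root_parent_None[OF wT] by auto
  obtain d p where d: "tleq T a d" "tpar T d = Some p" "tleq T p c1" "\<rho> d = t1"
    using exists_edge_into_child[OF tT wS cons c1(2) c1r at t1] by blast
  obtain e q where e: "tleq T b e" "tpar T e = Some q" "tleq T q c2" "\<rho> e = t2"
    using exists_edge_into_child[OF tT wS cons c2(2) c2r bt t2] by blast
  have dc1: "tleq T d c1" using tleq_trans[OF tleq_parent[OF d(2)] d(3)] .
  have ec2: "tleq T e c2" using tleq_trans[OF tleq_parent[OF e(2)] e(3)] .
  have below_both: False if "tleq T y c1" "tleq T y c2" for y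
    using siblings_disjoint[OF wT c1(1) c2(1) c12 that] .
  have strictly_below: "tleq T y x" "y \<noteq> x" if "tleq T y c" "tpar T c = Some x" for y c
    using tleq_trans[OF that(1) tleq_parent[OF that(2)]] that parent_not_tleq_child[OF wT that(2)]
    by auto
  have "regraft_setting T x d e"
  proof
    show "\<not> tleq T d e" using below_both tleq_trans[OF _ ec2, of d] dc1 by blast
    show "\<not> tleq T e d" using below_both tleq_trans[OF _ dc1, of e] ec2 by blast
  qed (use wT strictly_below dc1 ec2 c1(1) c2(1) in auto)
  moreover have "p \<noteq> x" using strictly_below(2)[OF d(3) c1(1)] .
  moreover have "\<not> tleq T e p" using below_both tleq_trans[OF _ d(3), of e] ec2 by blast
  ultimately show thesis using that d e by blast
qed

lemma duplication_reducible:
  assumes dl: "dl_reconciliation G T S \<phi> \<rho>"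
    and pa: "tpar G a = Some x" and pb: "tpar G b = Some x" and ab: "a \<noteq> b"
    and pt1: "tpar S t1 = Some (\<rho> x)" and pt2: "tpar S t2 = Some (\<rho> x)" and t12: "t1 \<noteq> t2"
    and at: "tleq S (\<rho> a) t1" and bt: "tleq S (\<rho> b) t2" and dup: "is_dup T S \<rho> x"
  obtains T' where "dl_reconciliation G T' S \<phi> \<rho>" "card (losses G T') < card (losses G T)"
proof -
  have tS: "is_tree S" and ext: "is_extension T G"
    using dl unfolding dl_reconciliation_def by blast+
  have tT: "is_tree T" and tG: "is_tree G" using ext unfolding is_extension_def by blast+
  have disp: "displays T G" by (rule extension_displays[OF ext])
  obtain d p e where R: "regraft_setting T x d e" and ad: "tleq T a d" and be: "tleq T b e"
    and dp: "tpar T d = Some p" "p \<noteq> x" "\<not> tleq T e p" and rde: "\<rho> d = t1" "\<rho> e = t2"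
    using duplication_regraft_points[OF dl pa pb ab pt1 pt2 at bt dup] by blast
  interpret R: regraft_setting T x d e by (fact R)
  have xr: "x \<noteq> troot T"
    using is_tree_children_pair(1)[OF tG pa pb ab] disp unfolding displays_def by simp
  have GD: "tV G \<inter> dropped T x d e = {}"
    using R.displayed_not_dropped[OF is_tree_rooted[OF tG] disp pa is_tree_children_pair(2)[OF tG pa pb ab] ad be] .
  obtain l where l: "l \<in> leaves T" "l \<in> dropped T x d e"
    using R.exists_dropped_leaf[OF tT dp] by blast
  have "children S (\<rho> x) = {t1, t2}" by (rule is_tree_children_pair(2)[OF tS pt1 pt2 t12])
  then have "dl_reconciliation G (regraft T x d e) S \<phi> \<rho>"
    using R.dl_reconciliation_regraft[OF dl xr GD] rde t12 by blast
  then show thesis using that R.card_losses_regraft_less[OF GD l] by blast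
qed

lemma separated_upper_bound_eq:
  assumes w: "rooted_tree S" and t1: "tpar S t1 = Some s" and t2: "tpar S t2 = Some s" and t12: "t1 \<noteq> t2"
    and u: "tleq S u t1" "tleq S u m" and v: "tleq S v t2" "tleq S v m" and ms: "tleq S m s"
  shows "m = s"
proof -
  have "\<not> tleq S m t1" using siblings_disjoint[OF w t1 t2 t12 tleq_trans[OF v(2)] v(1)] by blast
  then have "tleq S t1 m" "t1 \<noteq> m" using tleq_linear_above[OF u] by auto
  then have "tleq S s m" using tleq_parent_of_less[OF _ _ t1] by blast
  then show ?thesis using tleq_antisym[OF w ms] by blast
qed

lemma rho_lca_least_upper_bound:
  assumes st: "standing G S \<phi>" and wS: "rooted_tree S" and wG: "rooted_tree G" and y: "y \<in> tV G"
  shows "\<And>l. l \<in> leaves G \<Longrightarrow> tleq G l y \<Longrightarrow> tleq S (\<phi> l) (rho_lca G S \<phi> y)"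
    and "\<And>z. z \<in> tV S \<Longrightarrow> (\<And>l. l \<in> leaves G \<Longrightarrow> tleq G l y \<Longrightarrow> tleq S (\<phi> l) z) \<Longrightarrow>
      tleq S (rho_lca G S \<phi> y) z"
proof -
  define L where "L = \<phi> ` {l \<in> leaves G. tleq G l y}"
  have "L \<subseteq> tV S" using st unfolding L_def standing_def leaves_def by blast
  moreover have "L \<noteq> {}" using exists_leaf_below[OF wG y] unfolding L_def by blast
  ultimately have P: "\<forall>a\<in>L. tleq S a (rho_lca G S \<phi> y)"
    "\<forall>z\<in>tV S. (\<forall>a\<in>L. tleq S a z) \<longrightarrow> tleq S (rho_lca G S \<phi> y) z"
    using lca_least_upper_bound[OF wS] unfolding rho_lca_def L_def by blast+
  show "\<And>l. l \<in> leaves G \<Longrightarrow> tleq G l y \<Longrightarrow> tleq S (\<phi> l) (rho_lca G S \<phi> y)"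
    using P(1) unfolding L_def by blast
  show "\<And>z. z \<in> tV S \<Longrightarrow> (\<And>l. l \<in> leaves G \<Longrightarrow> tleq G l y \<Longrightarrow> tleq S (\<phi> l) z) \<Longrightarrow>
      tleq S (rho_lca G S \<phi> y) z"
    using P(2) unfolding L_def by blast
qed

lemma rho_lca_le_image:
  assumes st: "standing G S \<phi>" and dl: "dl_reconciliation G T S \<phi> \<rho>"
    and y: "y \<in> tV G" and c: "c \<in> tV T" and yc: "tleq T y c"
  shows "tleq S (rho_lca G S \<phi> y) (\<rho> c)"
proof -
  have tS: "is_tree S" and ext: "is_extension T G" and cons: "consistent T S \<rho>"
    and lv: "\<forall>l\<in>leaves G. \<rho> l = \<phi> l"
    using dl unfolding dl_reconciliation_def by blast+
  have tT: "is_tree T" and tG: "is_tree G" using ext unfolding is_extension_def by blast+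
  have disp: "displays T G" by (rule extension_displays[OF ext])
  show ?thesis
  proof (rule rho_lca_least_upper_bound(2)[OF st is_tree_rooted[OF tS] is_tree_rooted[OF tG] y])
    show "\<rho> c \<in> tV S" using cons c unfolding consistent_def by blast
    fix l assume l: "l \<in> leaves G" "tleq G l y"
    then have "tleq T l y" using displays_tleq_iff[OF disp _ y] unfolding leaves_def by blast
    then have "tleq S (\<rho> l) (\<rho> c)"
      using consistent_mono[OF tT is_tree_rooted[OF tS] cons tleq_trans[OF _ yc]] by blast
    then show "tleq S (\<phi> l) (\<rho> c)" using lv l(1) by simp
  qed
qed

lemma speciation_children:
  assumes st: "standing G S \<phi>" and dl: "dl_reconciliation G T S \<phi> \<rho>"
    and xG: "x \<in> tV G" and xs: "x \<in> Sigma T S \<rho>"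
  obtains a b c1 c2 where "tpar G a = Some x" "tpar G b = Some x" "a \<noteq> b"
    "tpar T c1 = Some x" "tleq T a c1" "tpar T c2 = Some x" "tleq T b c2"
    "tpar S (\<rho> c1) = Some (\<rho> x)" "tpar S (\<rho> c2) = Some (\<rho> x)" "\<rho> c1 \<noteq> \<rho> c2"
proof -
  have tS: "is_tree S" and ext: "is_extension T G" and cons: "consistent T S \<rho>"
    and lv: "\<forall>l\<in>leaves G. \<rho> l = \<phi> l"
    using dl unfolding dl_reconciliation_def by blast+
  have tT: "is_tree T" and tG: "is_tree G" using ext unfolding is_extension_def by blast+
  have wS: "rooted_tree S" and wT: "rooted_tree T" and wG: "rooted_tree G"
    using tS tT tG by (simp_all add: is_tree_rooted)
  have disp: "displays T G" by (rule extension_displays[OF ext])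
  have xT: "x \<in> tV T" and spec: "is_spec T S \<rho> x" using xs unfolding Sigma_def by blast+
  have cS: "card (children S (\<rho> x)) = 2" using spec unfolding is_spec_def by blast
  have xr: "x \<noteq> troot G"
    using cS cons disp is_tree_card_children_root[OF tS] unfolding consistent_def displays_def by auto
  have "x \<notin> leaves G"
  proof
    assume x: "x \<in> leaves G"
    then have "\<rho> x \<in> leaves S" using lv st unfolding standing_def by auto
    then show False using cS unfolding leaves_def by simp
  qed
  then obtain c where "tpar G c = Some x" using xG unfolding leaves_def children_def by blast
  then have "card (children G x) = 2" by (rule is_tree_card_children_parent[OF tG xG xr])
  then obtain a' b where "children G x = {a', b}" "a' \<noteq> b" by (meson card_2_iff)
  then obtain a b where pa: "tpar G a = Some x" and pb: "tpar G b = Some x" and ab: "a \<noteq> b"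
    by (auto simp: children_def set_eq_iff)
  obtain c1 c2 where c1: "tpar T c1 = Some x" "tleq T a c1" and c2: "tpar T c2 = Some x" "tleq T b c2"
    and c12: "c1 \<noteq> c2"
    using displayed_children_split[OF wT wG disp pa pb ab] by blast
  have img: "children S (\<rho> x) = {\<rho> c1, \<rho> c2}"
    using spec is_tree_children_pair(2)[OF tT c1(1) c2(1) c12] unfolding is_spec_def by simp
  then have t12: "\<rho> c1 \<noteq> \<rho> c2" using cS by auto
  have t1: "tpar S (\<rho> c1) = Some (\<rho> x)" and t2: "tpar S (\<rho> c2) = Some (\<rho> x)"
    using img unfolding children_def by blast+
  then show thesis using that pa pb ab c1 c2 t1 t2 t12 by blast
qed

lemma speciation_rho_lca:
  assumes st: "standing G S \<phi>" and dl: "dl_reconciliation G T S \<phi> \<rho>"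
    and xG: "x \<in> tV G" and xs: "x \<in> Sigma T S \<rho>"
  obtains a b t1 t2 where "tpar G a = Some x" "tpar G b = Some x" "a \<noteq> b"
    "tpar S t1 = Some (\<rho> x)" "tpar S t2 = Some (\<rho> x)" "t1 \<noteq> t2"
    "tleq S (rho_lca G S \<phi> a) t1" "tleq S (rho_lca G S \<phi> b) t2" "\<rho> x = rho_lca G S \<phi> x"
proof -
  obtain a b c1 c2 where pa: "tpar G a = Some x" and pb: "tpar G b = Some x" and ab: "a \<noteq> b"
    and c1: "tpar T c1 = Some x" "tleq T a c1" and c2: "tpar T c2 = Some x" "tleq T b c2"
    and t1: "tpar S (\<rho> c1) = Some (\<rho> x)" and t2: "tpar S (\<rho> c2) = Some (\<rho> x)"
    and t12: "\<rho> c1 \<noteq> \<rho> c2"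
    using speciation_children[OF st dl xG xs] by blast
  have wS: "rooted_tree S" and wG: "rooted_tree G"
    using dl is_tree_rooted unfolding dl_reconciliation_def is_extension_def by blast+
  have xT: "x \<in> tV T" using xs unfolding Sigma_def by blast
  have aG: "a \<in> tV G" and bG: "b \<in> tV G" using child_in_tV pa pb by fast+
  have la: "tleq S (rho_lca G S \<phi> a) (\<rho> c1)" and lb: "tleq S (rho_lca G S \<phi> b) (\<rho> c2)"
    using rho_lca_le_image[OF st dl aG child_in_tV[OF c1(1)] c1(2)]
      rho_lca_le_image[OF st dl bG child_in_tV[OF c2(1)] c2(2)] .
  have "\<rho> x = rho_lca G S \<phi> x"
  proof -
    obtain la where la': "la \<in> leaves G" "tleq G la a" using exists_leaf_below[OF wG aG] by blast
    obtain lb where lb': "lb \<in> leaves G" "tleq G lb b" using exists_leaf_below[OF wG bG] by blast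
    note props = rho_lca_least_upper_bound(1)[OF st wS wG]
    show ?thesis
    proof (rule separated_upper_bound_eq[OF wS t1 t2 t12, symmetric])
      show "tleq S (\<phi> la) (\<rho> c1)" using tleq_trans[OF props[OF aG la'] la] .
      show "tleq S (\<phi> lb) (\<rho> c2)" using tleq_trans[OF props[OF bG lb'] lb] .
      show "tleq S (\<phi> la) (rho_lca G S \<phi> x)"
        using props[OF xG la'(1) tleq_trans[OF la'(2) tleq_parent[OF pa]]] .
      show "tleq S (\<phi> lb) (rho_lca G S \<phi> x)"
        using props[OF xG lb'(1) tleq_trans[OF lb'(2) tleq_parent[OF pb]]] .
      show "tleq S (rho_lca G S \<phi> x) (\<rho> x)"
        using rho_lca_le_image[OF st dl xG xT tleq_refl] .
    qed
  qed
  then show thesis using that pa pb ab t1 t2 t12 la lb by blast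
qed

lemma lca_reconciliation_speciation:
  assumes lr: "lca_reconciliation G G2 S \<phi> \<rho>2"
    and pa: "tpar G a = Some x" and pb: "tpar G b = Some x" and ab: "a \<noteq> b"
    and t: "tpar S t1 = Some s" "tpar S t2 = Some s" "t1 \<noteq> t2"
    and at: "tleq S (rho_lca G S \<phi> a) t1" and bt: "tleq S (rho_lca G S \<phi> b) t2"
    and xs: "rho_lca G S \<phi> x = s"
  shows "x \<in> Sigma G2 S \<rho>2"
proof -
  have dl2: "dl_reconciliation G G2 S \<phi> \<rho>2" and agree: "\<forall>y\<in>tV G. \<rho>2 y = rho_lca G S \<phi> y"
    and minimal: "\<And>G3. dl_reconciliation G G3 S \<phi> \<rho>2 \<Longrightarrow> card (losses G G2) \<le> card (losses G G3)"
    using lr unfolding lca_reconciliation_def by blast+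
  have tG2: "is_tree G2" and tG: "is_tree G" and ext: "is_extension G2 G"
    and cons: "consistent G2 S \<rho>2"
    using dl2 unfolding dl_reconciliation_def is_extension_def by blast+
  have disp: "displays G2 G" by (rule extension_displays[OF ext])
  obtain c1 c2 where "tpar G2 c1 = Some x" "tpar G2 c2 = Some x" "c1 \<noteq> c2"
    using displayed_children_split[OF is_tree_rooted[OF tG2] is_tree_rooted[OF tG] disp pa pb ab]
    by blast
  then have "card (children G2 x) = 2" using is_tree_children_pair(2)[OF tG2] by simp
  moreover have xG: "x \<in> tV G" using parent_in_tV[OF is_tree_rooted[OF tG] pa] .
  then have xG2: "x \<in> tV G2" using disp unfolding displays_def by blast
  ultimately have "is_dup G2 S \<rho>2 x \<or> is_spec G2 S \<rho>2 x" using cons unfolding consistent_def by blast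
  moreover have "\<not> is_dup G2 S \<rho>2 x"
  proof
    assume dup: "is_dup G2 S \<rho>2 x"
    have "\<rho>2 x = s" "\<rho>2 a = rho_lca G S \<phi> a" "\<rho>2 b = rho_lca G S \<phi> b"
      using agree xG xs child_in_tV[OF pa] child_in_tV[OF pb] by auto
    then have "tpar S t1 = Some (\<rho>2 x)" "tpar S t2 = Some (\<rho>2 x)"
      and "tleq S (\<rho>2 a) t1" "tleq S (\<rho>2 b) t2" using t at bt by simp_all
    then obtain G3 where "dl_reconciliation G G3 S \<phi> \<rho>2" "card (losses G G3) < card (losses G G2)"
      using duplication_reducible[OF dl2 pa pb ab _ _ t(3) _ _ dup] by blast
    then show False using minimal by fastforce
  qed
  ultimately show ?thesis using xG2 unfolding Sigma_def by blast
qed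

theorem lemma9:
  fixes G G' :: "'a tree" and S :: "'b tree" and \<phi> \<rho> :: "'a \<Rightarrow> 'b" and \<delta> :: "'a \<rightharpoonup> 'a"
  assumes "standing G S \<phi>"
    and "reconciliation G G' S \<phi> \<rho> \<delta>"
    and "x \<in> tV G"
    and "x \<in> Sigma G' S \<rho>"
  shows "(\<forall>G2 \<rho>2. lca_reconciliation G G2 S \<phi> \<rho>2 \<longrightarrow> x \<in> Sigma G2 S \<rho>2)
         \<and> \<rho> x = rho_lca G S \<phi> x"
proof -
  have dl: "dl_reconciliation G G' S \<phi> \<rho>" using assms(2) unfolding reconciliation_def by blast
  obtain a b t1 t2 where pa: "tpar G a = Some x" and pb: "tpar G b = Some x" and ab: "a \<noteq> b"
    and t: "tpar S t1 = Some (\<rho> x)" "tpar S t2 = Some (\<rho> x)" "t1 \<noteq> t2"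
    and at: "tleq S (rho_lca G S \<phi> a) t1" and bt: "tleq S (rho_lca G S \<phi> b) t2"
    and lca_x: "\<rho> x = rho_lca G S \<phi> x"
    using speciation_rho_lca[OF assms(1) dl assms(3,4)] by blast
  have "x \<in> Sigma G2 S \<rho>2" if "lca_reconciliation G G2 S \<phi> \<rho>2" for G2 \<rho>2
    by (rule lca_reconciliation_speciation[OF that pa pb ab t at bt lca_x[symmetric]])
  then show ?thesis using lca_x by blast
qed

end
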